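(* For all $n\ge 1$, $|F_n(321,1423,4123)|=F_{n+1}-1$, where $F_n$ is the $n$-th Fibonacci number with $F_0=F_1=1$ and $F_n=F_{n-1}+F_{n-2}$ for $n\ge 2$.
   Context: A permutation $\pi$ avoids a classical pattern $p\in S_k$ if no subsequence of $\pi$ of length $k$ is order-isomorphic to $p$. A Fishburn permutation is a permutation $\pi=\pi_1\cdots\pi_n$ of $[n]$ for which there are no indices $i<j$ with $\pi_j<\pi_i<\pi_{i+1}$ and $\pi_i=\pi_j+1$. $F_n(\sigma_1,\dots,\sigma_k)$ denotes the set of Fishburn permutations of length $n$ avoiding each of the classical patterns $\sigma_1,\dots,\sigma_k$. *)

theory Defs
  imports Main
begin

(* Permutations of [n] are represented as lists: pi = [pi_1, ..., pi_n] (0-indexed in Isabelle). *)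
definition is_perm :: "nat \<Rightarrow> nat list \<Rightarrow> bool" where
  "is_perm n xs \<longleftrightarrow> length xs = n \<and> distinct xs \<and> set xs = {1..n}"

definition contains :: "nat list \<Rightarrow> nat list \<Rightarrow> bool" where
  "contains xs p \<longleftrightarrow> (\<exists>idx :: nat list.
      length idx = length p \<and> sorted_wrt (<) idx \<and> (\<forall>i\<in>set idx. i < length xs) \<and>
      (\<forall>a < length p. \<forall>b < length p.
          (xs ! (idx ! a) < xs ! (idx ! b)) \<longleftrightarrow> (p ! a < p ! b)))"

definition avoids :: "nat list \<Rightarrow> nat list \<Rightarrow> bool" where
  "avoids xs p \<longleftrightarrow> \<not> contains xs p"

definition fishburn :: "nat list \<Rightarrow> bool" where
  "fishburn xs \<longleftrightarrow> \<not> (\<exists>i j. i < j \<and> j < length xs \<and> i + 1 < length xs \<and>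
      xs ! j < xs ! i \<and> xs ! i < xs ! (i + 1) \<and> xs ! i = xs ! j + 1)"

definition fishburn_avoiders :: "nat \<Rightarrow> nat list list \<Rightarrow> nat list set" where
  "fishburn_avoiders n ps = {xs. is_perm n xs \<and> fishburn xs \<and> (\<forall>p\<in>set ps. avoids xs p)}"

fun fib1 :: "nat \<Rightarrow> nat" where
  "fib1 0 = 1"
| "fib1 (Suc 0) = 1"
| "fib1 (Suc (Suc n)) = fib1 (Suc n) + fib1 n"

end

theory Submission
  imports Defs
begin

text \<open>
  If a permutation avoids 321 and 4123, the entries after its maximum n increase, so at most
  two entries follow n. Hence it ends in n, or in n (n - 1), or the Fishburn condition and the
  three patterns pin it down to 3 1 4 5 ... n 2. Removing the final n, resp. n (n - 1), is a
  bijection onto the class of length n - 1, resp. n - 2: appending entries larger than all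
  others cannot create a pattern that does not end in its maximum. So the class sizes satisfy
  a(n) = a(n - 1) + a(n - 2) + 1 for n \<ge> 3, i.e. a(n) + 1 satisfies the Fibonacci recurrence.
\<close>

section \<open>Pattern containment and the Fishburn condition\<close>

lemma sorted_wrt_less_nth_add_le:
  assumes "sorted_wrt (<) (idx :: nat list)" "a \<le> b" "b < length idx"
  shows "idx ! a + (b - a) \<le> idx ! b"
  using assms(2,3)
proof (induction b)
  case 0
  then show ?case by simp
next
  case (Suc b)
  show ?case
  proof (cases "a = Suc b")
    case False
    then have "idx ! a + (b - a) \<le> idx ! b" using Suc by simp
    moreover have "idx ! b < idx ! Suc b" using assms(1) Suc.prems sorted_wrt_nth_less by blast
    ultimately show ?thesis using False Suc.prems by linarith
  qed simp
qed

lemma contains_append: "contains xs p \<Longrightarrow> contains (xs @ ys) p"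
proof -
  assume "contains xs p"
  then obtain idx where "length idx = length p" "sorted_wrt (<) idx" "\<forall>i\<in>set idx. i < length xs"
    "\<forall>a < length p. \<forall>b < length p. (xs ! (idx ! a) < xs ! (idx ! b)) \<longleftrightarrow> (p ! a < p ! b)"
    unfolding contains_def by blast
  then show ?thesis
    unfolding contains_def by (intro exI[of _ idx]) (auto simp: nth_append)
qed

lemma contains_append_greater:
  assumes "contains (xs @ ys) p"
    and greater: "\<forall>x\<in>set xs. \<forall>y\<in>set ys. x < y"
    and "c + length ys < length p" and "last p < p ! c"
  shows "contains xs p"
proof -
  obtain idx where len: "length idx = length p" and sorted: "sorted_wrt (<) idx"
    and bound: "\<forall>i\<in>set idx. i < length (xs @ ys)"
    and order: "\<forall>a < length p. \<forall>b < length p.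
                  ((xs @ ys) ! (idx ! a) < (xs @ ys) ! (idx ! b)) \<longleftrightarrow> (p ! a < p ! b)"
    using assms(1) unfolding contains_def by blast
  define m where "m = length p - 1"
  have m: "c \<le> m" "m < length p" "last p = p ! m"
    using assms(3) last_conv_nth[of p] unfolding m_def by fastforce+
  have "idx ! c + (m - c) \<le> idx ! m" "idx ! m < length xs + length ys"
    using sorted_wrt_less_nth_add_le[OF sorted m(1)] m(2) len bound by auto
  then have c_in_xs: "idx ! c < length xs" using assms(3) m_def by linarith
  have last_in_xs: "idx ! m < length xs"
  proof (rule ccontr)
    assume "\<not> idx ! m < length xs"
    then have "(xs @ ys) ! (idx ! m) \<in> set ys"
      using \<open>idx ! m < length xs + length ys\<close> by (simp add: nth_append)
    moreover have "(xs @ ys) ! (idx ! c) \<in> set xs" using c_in_xs by (simp add: nth_append)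
    ultimately have "(xs @ ys) ! (idx ! c) < (xs @ ys) ! (idx ! m)" using greater by blast
    then show False using order m assms(3,4) by fastforce
  qed
  have "\<forall>i\<in>set idx. i < length xs"
  proof
    fix i assume "i \<in> set idx"
    then obtain a where "a < length idx" "i = idx ! a" by (auto simp: in_set_conv_nth)
    then show "i < length xs"
      using sorted_wrt_less_nth_add_le[OF sorted, of a m] last_in_xs len m_def by fastforce
  qed
  then show ?thesis
    unfolding contains_def using len sorted order by (auto simp: nth_append intro!: exI[of _ idx])
qed

lemma contains_Nil_iff: "contains [] p \<longleftrightarrow> p = []"
  unfolding contains_def
  by (metis empty_iff length_0_conv list.set_sel(1) not_less0 set_empty sorted_wrt.simps(1))

lemma contains_321_iff:
  "contains xs [3,2,1] \<longleftrightarrow>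
    (\<exists>i j k. i < j \<and> j < k \<and> k < length xs \<and> xs ! j < xs ! i \<and> xs ! k < xs ! j)"
proof
  assume "contains xs [3,2,1]"
  then obtain idx where len: "length idx = length [3,2,1::nat]" and "sorted_wrt (<) idx"
    and "\<forall>i\<in>set idx. i < length xs"
    and order: "\<forall>a < length [3,2,1::nat]. \<forall>b < length [3,2,1::nat].
                  (xs ! (idx ! a) < xs ! (idx ! b)) \<longleftrightarrow> ([3,2,1::nat] ! a < [3,2,1] ! b)"
    unfolding contains_def by blast
  moreover obtain i j k where "idx = [i, j, k]"
    using len by (auto simp: length_Suc_conv)
  moreover have "xs ! j < xs ! i" "xs ! k < xs ! j"
    using order[rule_format, of 1 0] order[rule_format, of 2 1] \<open>idx = [i, j, k]\<close> by simp_all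
  ultimately show "\<exists>i j k. i < j \<and> j < k \<and> k < length xs \<and> xs ! j < xs ! i \<and> xs ! k < xs ! j"
    by auto
next
  assume "\<exists>i j k. i < j \<and> j < k \<and> k < length xs \<and> xs ! j < xs ! i \<and> xs ! k < xs ! j"
  then obtain i j k where "i < j" "j < k" "k < length xs" "xs ! j < xs ! i" "xs ! k < xs ! j" by blast
  then show "contains xs [3,2,1]"
    unfolding contains_def by (intro exI[of _ "[i, j, k]"]) (auto simp: less_Suc_eq numeral_3_eq_3)
qed

lemma contains_1423_iff:
  "contains xs [1,4,2,3] \<longleftrightarrow> (\<exists>i j k l. i < j \<and> j < k \<and> k < l \<and> l < length xs \<and>
      xs ! i < xs ! k \<and> xs ! k < xs ! l \<and> xs ! l < xs ! j)"
proof
  assume "contains xs [1,4,2,3]"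
  then obtain idx where len: "length idx = length [1,4,2,3::nat]" and "sorted_wrt (<) idx"
    and "\<forall>i\<in>set idx. i < length xs"
    and order: "\<forall>a < length [1,4,2,3::nat]. \<forall>b < length [1,4,2,3::nat].
                  (xs ! (idx ! a) < xs ! (idx ! b)) \<longleftrightarrow> ([1,4,2,3::nat] ! a < [1,4,2,3] ! b)"
    unfolding contains_def by blast
  moreover obtain i j k l where "idx = [i, j, k, l]"
    using len by (auto simp: length_Suc_conv)
  moreover have "xs ! i < xs ! k" "xs ! k < xs ! l" "xs ! l < xs ! j"
    using order[rule_format, of 0 2] order[rule_format, of 2 3] order[rule_format, of 3 1]
      \<open>idx = [i, j, k, l]\<close> by simp_all
  ultimately show "\<exists>i j k l. i < j \<and> j < k \<and> k < l \<and> l < length xs \<and>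
      xs ! i < xs ! k \<and> xs ! k < xs ! l \<and> xs ! l < xs ! j"
    by auto
next
  assume "\<exists>i j k l. i < j \<and> j < k \<and> k < l \<and> l < length xs \<and>
      xs ! i < xs ! k \<and> xs ! k < xs ! l \<and> xs ! l < xs ! j"
  then obtain i j k l where "i < j" "j < k" "k < l" "l < length xs"
    "xs ! i < xs ! k" "xs ! k < xs ! l" "xs ! l < xs ! j" by blast
  then show "contains xs [1,4,2,3]"
    unfolding contains_def by (intro exI[of _ "[i, j, k, l]"]) (auto simp: less_Suc_eq numeral_eq_Suc)
qed

lemma contains_4123_iff:
  "contains xs [4,1,2,3] \<longleftrightarrow> (\<exists>i j k l. i < j \<and> j < k \<and> k < l \<and> l < length xs \<and>
      xs ! j < xs ! k \<and> xs ! k < xs ! l \<and> xs ! l < xs ! i)"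
proof
  assume "contains xs [4,1,2,3]"
  then obtain idx where len: "length idx = length [4,1,2,3::nat]" and "sorted_wrt (<) idx"
    and "\<forall>i\<in>set idx. i < length xs"
    and order: "\<forall>a < length [4,1,2,3::nat]. \<forall>b < length [4,1,2,3::nat].
                  (xs ! (idx ! a) < xs ! (idx ! b)) \<longleftrightarrow> ([4,1,2,3::nat] ! a < [4,1,2,3] ! b)"
    unfolding contains_def by blast
  moreover obtain i j k l where "idx = [i, j, k, l]"
    using len by (auto simp: length_Suc_conv)
  moreover have "xs ! j < xs ! k" "xs ! k < xs ! l" "xs ! l < xs ! i"
    using order[rule_format, of 1 2] order[rule_format, of 2 3] order[rule_format, of 3 0]
      \<open>idx = [i, j, k, l]\<close> by simp_all
  ultimately show "\<exists>i j k l. i < j \<and> j < k \<and> k < l \<and> l < length xs \<and>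
      xs ! j < xs ! k \<and> xs ! k < xs ! l \<and> xs ! l < xs ! i"
    by auto
next
  assume "\<exists>i j k l. i < j \<and> j < k \<and> k < l \<and> l < length xs \<and>
      xs ! j < xs ! k \<and> xs ! k < xs ! l \<and> xs ! l < xs ! i"
  then obtain i j k l where "i < j" "j < k" "k < l" "l < length xs"
    "xs ! j < xs ! k" "xs ! k < xs ! l" "xs ! l < xs ! i" by blast
  then show "contains xs [4,1,2,3]"
    unfolding contains_def by (intro exI[of _ "[i, j, k, l]"]) (auto simp: less_Suc_eq numeral_eq_Suc)
qed

text \<open>The conditions \<open>xs ! j < xs ! i\<close> and \<open>i + 1 < length xs\<close> of the definition are redundant.\<close>

lemma fishburn_iff:
  "fishburn xs \<longleftrightarrow> \<not> (\<exists>i j. i < j \<and> j < length xs \<and> xs ! i = xs ! j + 1 \<and> xs ! i < xs ! (i + 1))"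
proof -
  have "(i < j \<and> j < length xs \<and> i + 1 < length xs \<and> xs ! j < xs ! i \<and> xs ! i < xs ! (i + 1)
          \<and> xs ! i = xs ! j + 1)
      \<longleftrightarrow> (i < j \<and> j < length xs \<and> xs ! i = xs ! j + 1 \<and> xs ! i < xs ! (i + 1))" for i j
    by auto
  then show ?thesis unfolding fishburn_def by (simp only:)
qed

lemma fishburnI:
  "(\<And>i j. i < j \<Longrightarrow> j < length xs \<Longrightarrow> xs ! i = xs ! j + 1 \<Longrightarrow> xs ! i < xs ! (i + 1) \<Longrightarrow> False)
    \<Longrightarrow> fishburn xs"
  unfolding fishburn_iff by blast

lemma fishburnD:
  "fishburn xs \<Longrightarrow> i < j \<Longrightarrow> j < length xs \<Longrightarrow> xs ! i = xs ! j + 1 \<Longrightarrow> xs ! i < xs ! (i + 1) \<Longrightarrow> False"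
  unfolding fishburn_iff by blast

lemma fishburn_appendD:
  assumes "fishburn (xs @ ys)"
  shows "fishburn xs"
proof (rule fishburnI)
  fix i j assume "i < j" "j < length xs" "xs ! i = xs ! j + 1" "xs ! i < xs ! (i + 1)"
  then show False using fishburnD[OF assms, of i j] by (simp add: nth_append)
qed

lemma fishburn_append_greater:
  assumes "fishburn xs" "fishburn ys" and greater: "\<forall>x\<in>set xs. \<forall>y\<in>set ys. x < y"
  shows "fishburn (xs @ ys)"
proof (rule fishburnI)
  fix i j
  assume ij: "i < j" "j < length (xs @ ys)"
    and step: "(xs @ ys) ! i = (xs @ ys) ! j + 1" "(xs @ ys) ! i < (xs @ ys) ! (i + 1)"
  show False
  proof (cases "j < length xs")
    case True
    then show False using fishburnD[OF assms(1), of i j] ij step by (simp add: nth_append)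
  next
    case j_in_ys: False
    show False
    proof (cases "i < length xs")
      case True
      then have "(xs @ ys) ! i < (xs @ ys) ! j" using j_in_ys ij greater by (simp add: nth_append)
      then show False using step by simp
    next
      case False
      then have "i - length xs < j - length xs" "j - length xs < length ys" using ij by auto
      then show False using fishburnD[OF assms(2), of "i - length xs" "j - length xs"] step False j_in_ys
        by (simp add: nth_append Suc_diff_le)
    qed
  qed
qed

lemma is_perm_append_iff:
  assumes "distinct ys" "set ys = {n<..n + length ys}"
  shows "is_perm (n + length ys) (xs @ ys) \<longleftrightarrow> is_perm n xs"
proof -
  have split: "{1..n + length ys} = {1..n} \<union> {n<..n + length ys}" by auto
  show ?thesis
  proof
    assume "is_perm (n + length ys) (xs @ ys)"
    then have "length xs = n" "distinct xs" "set xs \<inter> {n<..n + length ys} = {}"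
      "set xs \<union> {n<..n + length ys} = {1..n} \<union> {n<..n + length ys}"
      using assms unfolding is_perm_def split by auto
    then show "is_perm n xs" unfolding is_perm_def by auto
  next
    assume "is_perm n xs"
    then show "is_perm (n + length ys) (xs @ ys)" using assms unfolding is_perm_def split by auto
  qed
qed

section \<open>Appending large entries\<close>

abbreviation avoiders :: "nat \<Rightarrow> nat list set" where
  "avoiders n \<equiv> fishburn_avoiders n [[3,2,1], [1,4,2,3], [4,1,2,3]]"

lemma mem_avoiders_iff:
  "xs \<in> avoiders n \<longleftrightarrow>
    is_perm n xs \<and> fishburn xs \<and> avoids xs [3,2,1] \<and> avoids xs [1,4,2,3] \<and> avoids xs [4,1,2,3]"
  by (simp add: fishburn_avoiders_def)

lemma append_greater_mem_avoiders_iff: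
  assumes "distinct ys" "set ys = {n<..n + length ys}" "fishburn ys" "length ys \<le> 2"
  shows "xs @ ys \<in> avoiders (n + length ys) \<longleftrightarrow> xs \<in> avoiders n"
proof (cases "is_perm n xs")
  case True
  then have greater: "\<forall>x\<in>set xs. \<forall>y\<in>set ys. x < y" using assms(2) unfolding is_perm_def by auto
  have avoids_iff: "avoids (xs @ ys) p \<longleftrightarrow> avoids xs p" if "c + 2 < length p" "last p < p ! c" for c p
    using contains_append contains_append_greater[OF _ greater, of p c] that assms(4)
    unfolding avoids_def by fastforce
  have "fishburn (xs @ ys) \<longleftrightarrow> fishburn xs"
    using fishburn_appendD fishburn_append_greater[OF _ assms(3) greater] by blast
  then show ?thesis
    using True is_perm_append_iff[OF assms(1,2)] avoids_iff[of 0 "[3,2,1]"]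
      avoids_iff[of 1 "[1,4,2,3]"] avoids_iff[of 0 "[4,1,2,3]"]
    unfolding mem_avoiders_iff by simp
next
  case False
  then show ?thesis using is_perm_append_iff[OF assms(1,2)] unfolding mem_avoiders_iff by simp
qed

lemma snoc_mem_avoiders_iff: "xs @ [Suc n] \<in> avoiders (Suc n) \<longleftrightarrow> xs \<in> avoiders n"
proof -
  have "set [Suc n] = {n<..n + 1}" by auto
  then show ?thesis using append_greater_mem_avoiders_iff[of "[Suc n]" n xs] by (simp add: fishburn_def)
qed

lemma append_pair_mem_avoiders_iff:
  "xs @ [Suc (Suc n), Suc n] \<in> avoiders (Suc (Suc n)) \<longleftrightarrow> xs \<in> avoiders n"
proof -
  have "set [Suc (Suc n), Suc n] = {n<..n + 2}" by auto
  moreover have "fishburn [Suc (Suc n), Suc n]" by (simp add: fishburn_iff less_Suc_eq)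
  ultimately show ?thesis using append_greater_mem_avoiders_iff[of "[Suc (Suc n), Suc n]" n xs] by simp
qed

section \<open>The exceptional permutation\<close>

definition exceptional :: "nat \<Rightarrow> nat list" where
  "exceptional n = [3, 1] @ [4..<n + 1] @ [2]"

lemma length_exceptional: "3 \<le> n \<Longrightarrow> length (exceptional n) = n"
  by (simp add: exceptional_def del: upt_Suc)

lemma nth_exceptional:
  assumes "3 \<le> n" "i < n"
  shows "exceptional n ! i = (if i = 0 then 3 else if i = 1 then 1 else if i = n - 1 then 2 else i + 2)"
proof -
  have "exceptional n = [3, 1] @ [4..<n + 1] @ [2]" by (simp add: exceptional_def)
  moreover have "length [4..<n + 1] = n - 3" by (simp del: upt_Suc)
  ultimately show ?thesis
    using assms by (auto simp: nth_append nth_Cons' simp del: upt_Suc)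
qed

lemma last_exceptional: "last (exceptional n) = 2"
  by (simp add: exceptional_def)

lemma is_perm_exceptional: "3 \<le> n \<Longrightarrow> is_perm n (exceptional n)"
  unfolding is_perm_def using length_exceptional by (auto simp: exceptional_def simp del: upt_Suc)

lemma fishburn_exceptional:
  assumes n: "3 \<le> n"
  shows "fishburn (exceptional n)"
proof (rule fishburnI)
  let ?x = "exceptional n"
  note nth = nth_exceptional[OF n]
  fix i j assume ij: "i < j" "j < length ?x"
    and eq: "?x ! i = ?x ! j + 1" and ascent: "?x ! i < ?x ! (i + 1)"
  have lt: "i < n" "j < n" "i + 1 < n" using ij length_exceptional[OF n] by auto
  have "i \<noteq> 0" using ascent unfolding nth[OF lt(1)] nth[OF lt(3)] by (auto split: if_splits)
  moreover have "i \<noteq> 1" using eq unfolding nth[OF lt(1)] nth[OF lt(2)] by (auto split: if_splits)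
  ultimately show False
    using eq ij lt unfolding nth[OF lt(1)] nth[OF lt(2)] by (auto split: if_splits)
qed

lemma avoids_exceptional:
  assumes n: "3 \<le> n"
  shows "avoids (exceptional n) [3,2,1]" "avoids (exceptional n) [1,4,2,3]"
    "avoids (exceptional n) [4,1,2,3]"
proof -
  let ?x = "exceptional n"
  note nth = nth_exceptional[OF n] and len = length_exceptional[OF n]
  show "avoids ?x [3,2,1]"
    unfolding avoids_def contains_321_iff
  proof clarify
    fix i j k assume "i < j" "j < k" "k < length ?x" "?x ! j < ?x ! i" "?x ! k < ?x ! j"
    moreover have lt: "i < n" "j < n" "k < n" using \<open>i < j\<close> \<open>j < k\<close> \<open>k < length ?x\<close> len by auto
    ultimately show False unfolding nth[OF lt(1)] nth[OF lt(2)] nth[OF lt(3)] by (simp split: if_splits)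
  qed
  show "avoids ?x [1,4,2,3]"
    unfolding avoids_def contains_1423_iff
  proof clarify
    fix i j k l assume "i < j" "j < k" "k < l" "l < length ?x"
      "?x ! i < ?x ! k" "?x ! k < ?x ! l" "?x ! l < ?x ! j"
    moreover have lt: "i < n" "j < n" "k < n" "l < n"
      using \<open>i < j\<close> \<open>j < k\<close> \<open>k < l\<close> \<open>l < length ?x\<close> len by auto
    ultimately show False
      unfolding nth[OF lt(1)] nth[OF lt(2)] nth[OF lt(3)] nth[OF lt(4)] by (simp split: if_splits)
  qed
  show "avoids ?x [4,1,2,3]"
    unfolding avoids_def contains_4123_iff
  proof clarify
    fix i j k l assume "i < j" "j < k" "k < l" "l < length ?x"
      "?x ! j < ?x ! k" "?x ! k < ?x ! l" "?x ! l < ?x ! i"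
    moreover have lt: "i < n" "j < n" "k < n" "l < n"
      using \<open>i < j\<close> \<open>j < k\<close> \<open>k < l\<close> \<open>l < length ?x\<close> len by auto
    ultimately show False
      unfolding nth[OF lt(1)] nth[OF lt(2)] nth[OF lt(3)] nth[OF lt(4)] by (simp split: if_splits)
  qed
qed

lemma exceptional_neq_append:
  assumes "3 \<le> n"
  shows "exceptional n \<noteq> ys @ [n]" "exceptional n \<noteq> ys @ [n, n - 1]"
proof -
  show "exceptional n \<noteq> ys @ [n]" using last_exceptional[of n] assms by auto
  show "exceptional n \<noteq> ys @ [n, n - 1]"
  proof
    assume eq: "exceptional n = ys @ [n, n - 1]"
    then have "n = 3" using arg_cong[OF eq, of last] last_exceptional[of n] assms by simp
    then have "last (butlast (exceptional n)) = 1" by (simp add: exceptional_def)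
    then show False using arg_cong[OF eq, of "last \<circ> butlast"] \<open>n = 3\<close> by (simp add: butlast_append)
  qed
qed

lemma exceptional_mem_avoiders: "3 \<le> n \<Longrightarrow> exceptional n \<in> avoiders n"
  unfolding mem_avoiders_iff using is_perm_exceptional fishburn_exceptional avoids_exceptional by blast

section \<open>Classification\<close>

locale avoider =
  fixes n :: nat and xs :: "nat list"
  assumes mem: "xs \<in> avoiders n"
begin

lemma perm: "is_perm n xs"
  using mem unfolding mem_avoiders_iff by blast

lemma length_eq: "length xs = n"
  using perm unfolding is_perm_def by blast

lemma nth_ge_1: "i < n \<Longrightarrow> 1 \<le> xs ! i"
  using perm nth_mem unfolding is_perm_def by fastforce

lemma nth_le: "i < n \<Longrightarrow> xs ! i \<le> n"
  using perm nth_mem unfolding is_perm_def by fastforce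

lemma nth_eq_iff: "i < n \<Longrightarrow> j < n \<Longrightarrow> xs ! i = xs ! j \<longleftrightarrow> i = j"
  using perm length_eq nth_eq_iff_index_eq unfolding is_perm_def by blast

lemma obtain_position:
  assumes "1 \<le> v" "v \<le> n"
  obtains i where "i < n" "xs ! i = v"
  using assms perm length_eq unfolding is_perm_def by (metis atLeastAtMost_iff in_set_conv_nth)

lemma no_fishburn_pattern:
  "i < j \<Longrightarrow> j < n \<Longrightarrow> xs ! i = xs ! j + 1 \<Longrightarrow> xs ! i < xs ! (i + 1) \<Longrightarrow> False"
  using mem fishburnD length_eq unfolding mem_avoiders_iff by blast

lemma no_321: "i < j \<Longrightarrow> j < k \<Longrightarrow> k < n \<Longrightarrow> xs ! j < xs ! i \<Longrightarrow> xs ! k < xs ! j \<Longrightarrow> False"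
  using mem length_eq unfolding mem_avoiders_iff avoids_def contains_321_iff by blast

lemma no_1423:
  "i < j \<Longrightarrow> j < k \<Longrightarrow> k < l \<Longrightarrow> l < n \<Longrightarrow> xs ! i < xs ! k \<Longrightarrow> xs ! k < xs ! l \<Longrightarrow> xs ! l < xs ! j
    \<Longrightarrow> False"
  using mem length_eq unfolding mem_avoiders_iff avoids_def contains_1423_iff by blast

lemma no_4123:
  "i < j \<Longrightarrow> j < k \<Longrightarrow> k < l \<Longrightarrow> l < n \<Longrightarrow> xs ! j < xs ! k \<Longrightarrow> xs ! k < xs ! l \<Longrightarrow> xs ! l < xs ! i
    \<Longrightarrow> False"
  using mem length_eq unfolding mem_avoiders_iff avoids_def contains_4123_iff by blast

lemma increasing_after_max:
  assumes "p < i" "i < j" "j < n" "xs ! p = n"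
  shows "xs ! i < xs ! j"
proof (rule ccontr)
  assume "\<not> xs ! i < xs ! j"
  then have "xs ! j < xs ! i" using nth_eq_iff[of i j] assms by fastforce
  moreover have "xs ! i < xs ! p" using nth_le[of i] nth_eq_iff[of i p] assms by fastforce
  ultimately show False using no_321[of p i j] assms by blast
qed

lemma max_position_ge:
  assumes "p < n" "xs ! p = n"
  shows "n \<le> p + 3"
proof (rule ccontr)
  assume "\<not> n \<le> p + 3"
  then have "p + 3 < n" by simp
  then have "xs ! (p + 1) < xs ! (p + 2)" "xs ! (p + 2) < xs ! (p + 3)"
    using increasing_after_max[of p "p + 1" "p + 2"] increasing_after_max[of p "p + 2" "p + 3"] assms
    by simp_all
  moreover have "xs ! (p + 3) < xs ! p"
    using nth_le[of "p + 3"] nth_eq_iff[of "p + 3" p] assms \<open>p + 3 < n\<close> by fastforce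
  ultimately show False using no_4123[of p "p + 1" "p + 2" "p + 3"] \<open>p + 3 < n\<close> by simp
qed

lemma fishburn_descent:
  assumes "q < j" "j < n" "xs ! q = xs ! j + 1"
  shows "xs ! (q + 1) < xs ! q"
proof -
  have "xs ! (q + 1) \<noteq> xs ! q" using nth_eq_iff[of "q + 1" q] assms by simp
  then show ?thesis using no_fishburn_pattern[OF assms] by fastforce
qed

lemma length_3_eq: "n = 3 \<Longrightarrow> xs = [xs ! 0, xs ! 1, xs ! 2]"
  using length_eq by (cases xs; cases "tl xs"; cases "tl (tl xs)") (auto simp: numeral_3_eq_3)

end

locale avoider_max_antepenultimate = avoider +
  assumes three_le: "3 \<le> n" and max_antepenultimate: "xs ! (n - 3) = n"
begin

lemma tail_positions: "n - 3 < n - 2" "n - 2 < n - 1" "n - 1 < n"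
  using three_le by auto

lemma tail_less: "xs ! (n - 2) < xs ! (n - 1)" "xs ! (n - 1) < n"
proof -
  show "xs ! (n - 2) < xs ! (n - 1)"
    using increasing_after_max[of "n - 3" "n - 2" "n - 1"] three_le max_antepenultimate by simp
  show "xs ! (n - 1) < n"
    using nth_le[of "n - 1"] nth_eq_iff[of "n - 1" "n - 3"] three_le max_antepenultimate by fastforce
qed

lemma penultimate_eq_1: "xs ! (n - 2) = 1"
proof (rule ccontr)
  assume "xs ! (n - 2) \<noteq> 1"
  then have "1 < xs ! (n - 2)" using nth_ge_1[of "n - 2"] three_le by fastforce
  obtain u where u: "u < n" "xs ! u = 1" using obtain_position[of 1] three_le by auto
  have "u \<noteq> n - 3" "u \<noteq> n - 2" "u \<noteq> n - 1"
    using u \<open>1 < xs ! (n - 2)\<close> tail_less max_antepenultimate three_le by auto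
  then have "u < n - 3" using u by linarith
  then show False
    using no_1423[of u "n - 3" "n - 2" "n - 1"] u \<open>1 < xs ! (n - 2)\<close> tail_less max_antepenultimate
      tail_positions by simp
qed

lemma last_eq: "xs ! (n - 1) = n - 1"
proof (rule ccontr)
  assume "xs ! (n - 1) \<noteq> n - 1"
  then have small: "xs ! (n - 1) + 1 < n" using tail_less by linarith
  obtain q where q: "q < n" "xs ! q = xs ! (n - 1) + 1" using obtain_position[of "xs ! (n - 1) + 1"] small by auto
  have "q \<noteq> n - 3" "q \<noteq> n - 2" "q \<noteq> n - 1"
    using q small max_antepenultimate penultimate_eq_1 nth_ge_1[of "n - 1"] three_le by auto
  then have "q < n - 3" using q by linarith
  then have descent: "xs ! (q + 1) < xs ! q"
    using fishburn_descent[of q "n - 1"] q three_le by simp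
  then have "q + 1 \<noteq> n - 3" using q small max_antepenultimate by auto
  then have "q + 1 < n - 2" using \<open>q < n - 3\<close> by linarith
  then have "1 < xs ! (q + 1)"
    using nth_ge_1[of "q + 1"] nth_eq_iff[of "q + 1" "n - 2"] penultimate_eq_1 by fastforce
  then show False
    using no_321[of q "q + 1" "n - 2"] \<open>q + 1 < n - 2\<close> descent penultimate_eq_1 three_le by simp
qed

lemma n_eq_3: "n = 3"
proof (rule ccontr)
  assume "n \<noteq> 3"
  obtain u where u: "u < n" "xs ! u = 2" using obtain_position[of 2] three_le by auto
  have "u \<noteq> n - 3" "u \<noteq> n - 2" "u \<noteq> n - 1"
    using u \<open>n \<noteq> 3\<close> three_le max_antepenultimate penultimate_eq_1 last_eq by auto
  then have "u + 1 < n - 2" using u by linarith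
  moreover have "xs ! (u + 1) < 2"
    using fishburn_descent[of u "n - 2"] u \<open>u + 1 < n - 2\<close> penultimate_eq_1 by simp
  then have "xs ! (u + 1) = xs ! (n - 2)" using nth_ge_1[of "u + 1"] \<open>u + 1 < n - 2\<close> penultimate_eq_1
    by fastforce
  ultimately show False using nth_eq_iff[of "u + 1" "n - 2"] by simp
qed

lemma eq_exceptional: "xs = exceptional n"
  using length_3_eq n_eq_3 max_antepenultimate penultimate_eq_1 last_eq
  by (simp add: exceptional_def)

end

lemma append_middle_conv: "2 < length xs \<Longrightarrow> xs = [xs ! 0, xs ! 1] @ drop 2 (butlast xs) @ [last xs]"
  by (cases xs; cases "tl xs") auto

text \<open>
  Here the permutation is \<open>\<sigma> n m\<close> with \<open>m < n - 1\<close>, and \<open>q\<close> is the position of \<open>m + 1\<close>.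
  The Fishburn condition for the pair \<open>m + 1, m\<close> forces a descent right after position \<open>q\<close>;
  321, 1423 and 4123 then confine the entries before and after \<open>q\<close> to value ranges that
  leave room only for \<open>3 1 4 5 \<dots> n 2\<close>.
\<close>

locale avoider_max_penultimate = avoider +
  fixes q :: nat
  assumes max_penultimate: "xs ! (n - 2) = n"
    and last_small: "xs ! (n - 1) + 1 < n"
    and q_less: "q < n" and nth_q: "xs ! q = xs ! (n - 1) + 1"
begin

lemma tail_positions: "n - 2 < n - 1" "n - 1 < n"
  using last_small by auto

lemma succ_q_less: "q + 1 < n - 2"
  and nth_succ_q_less: "xs ! (q + 1) < xs ! (n - 1)"
proof -
  have "q \<noteq> n - 2" "q \<noteq> n - 1" using nth_q max_penultimate last_small by auto
  then have "q < n - 2" using q_less by linarith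
  have descent: "xs ! (q + 1) < xs ! q"
    using fishburn_descent[of q "n - 1"] \<open>q < n - 2\<close> tail_positions nth_q by simp
  then have "q + 1 \<noteq> n - 2" using nth_q max_penultimate last_small by auto
  then show "q + 1 < n - 2" using \<open>q < n - 2\<close> by linarith
  then have "xs ! (q + 1) \<noteq> xs ! (n - 1)" using nth_eq_iff[of "q + 1" "n - 1"] tail_positions by simp
  then show "xs ! (q + 1) < xs ! (n - 1)" using descent nth_q by simp
qed

lemma succ_q_less_n: "q + 1 < n"
  using succ_q_less by linarith

lemma nth_between:
  assumes "q + 1 < r" "r < n - 2"
  shows "xs ! (n - 1) + 1 < xs ! r"
proof -
  have "r < n - 1" using assms by linarith
  have "xs ! r \<noteq> xs ! q" "xs ! r \<noteq> xs ! (n - 1)" "xs ! r \<noteq> xs ! (q + 1)"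
    using nth_eq_iff[of r q] nth_eq_iff[of r "n - 1"] nth_eq_iff[of r "q + 1"] assms \<open>r < n - 1\<close> by auto
  moreover have False if "xs ! r < xs ! (n - 1)"
  proof (cases "xs ! (q + 1) < xs ! r")
    case True
    then show False using no_4123[of q "q + 1" r "n - 1"] that assms nth_q tail_positions by simp
  next
    case False
    then show False using no_321[of q "q + 1" r] \<open>xs ! r \<noteq> xs ! (q + 1)\<close> \<open>r < n - 1\<close> assms nth_q
      nth_succ_q_less by (auto simp: less_diff_conv)
  qed
  ultimately show ?thesis using nth_q by fastforce
qed

lemma nth_before:
  assumes "r < q"
  shows "xs ! (q + 1) < xs ! r" "xs ! r < xs ! (n - 1)"
proof -
  have "xs ! r \<noteq> xs ! q" "xs ! r \<noteq> xs ! (n - 1)"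
    using nth_eq_iff[of r q] nth_eq_iff[of r "n - 1"] assms succ_q_less by auto
  moreover have "\<not> xs ! q < xs ! r"
    using no_321[of r q "n - 1"] assms succ_q_less nth_q tail_positions by auto
  ultimately show "xs ! r < xs ! (n - 1)" using nth_q by simp
  moreover have "xs ! (q + 1) \<noteq> xs ! r"
    using nth_eq_iff[of r "q + 1"] assms succ_q_less_n by auto
  ultimately show "xs ! (q + 1) < xs ! r"
    using no_1423[of r q "q + 1" "n - 1"] assms succ_q_less nth_succ_q_less nth_q by fastforce
qed

lemma nth_succ_q_eq_1: "xs ! (q + 1) = 1"
proof (rule ccontr)
  assume "xs ! (q + 1) \<noteq> 1"
  obtain u where u: "u < n" "xs ! u = 1" using obtain_position[of 1] q_less by auto
  have "u \<noteq> q + 1" "u \<noteq> q" "u \<noteq> n - 2" "u \<noteq> n - 1"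
    using u \<open>xs ! (q + 1) \<noteq> 1\<close> nth_q max_penultimate nth_succ_q_less nth_ge_1[of "q + 1"] succ_q_less
      tail_positions by auto
  moreover have "\<not> u < q" using nth_before(1)[of u] u nth_ge_1[of "q + 1"] succ_q_less_n by auto
  moreover have "\<not> (q + 1 < u \<and> u < n - 2)" using nth_between[of u] u by auto
  ultimately show False using u by linarith
qed

lemma last_eq_2: "xs ! (n - 1) = 2"
proof (rule ccontr)
  assume "xs ! (n - 1) \<noteq> 2"
  then have "3 \<le> xs ! (n - 1)" using nth_succ_q_less nth_succ_q_eq_1 by simp
  obtain u where u: "u < n" "xs ! u = 2" using obtain_position[of 2] last_small by auto
  have "u \<noteq> q + 1" "u \<noteq> q" "u \<noteq> n - 2" "u \<noteq> n - 1"
    using u \<open>3 \<le> xs ! (n - 1)\<close> nth_q max_penultimate nth_succ_q_eq_1 last_small by auto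
  moreover have "\<not> (q + 1 < u \<and> u < n - 2)" using nth_between[of u] u \<open>3 \<le> xs ! (n - 1)\<close> by auto
  ultimately have "u < q" using u by linarith
  then have "xs ! (u + 1) < 2"
    using fishburn_descent[of u "q + 1"] u nth_succ_q_eq_1 succ_q_less by simp
  then have "xs ! (u + 1) = xs ! (q + 1)"
    using nth_ge_1[of "u + 1"] nth_succ_q_eq_1 \<open>u < q\<close> q_less by fastforce
  then show False using nth_eq_iff[of "u + 1" "q + 1"] \<open>u < q\<close> succ_q_less_n by auto
qed

lemma q_eq_0: "q = 0"
  using nth_before[of 0] nth_succ_q_eq_1 last_eq_2 by (cases q) auto

lemma four_le: "4 \<le> n"
  using succ_q_less q_eq_0 by simp

lemma append_middle_eq:
  obtains M where "xs = [3, 1] @ M @ [2]"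
proof
  have "xs \<noteq> []" using length_eq four_le by auto
  have "xs = [xs ! 0, xs ! 1] @ drop 2 (butlast xs) @ [last xs]"
    using length_eq four_le by (intro append_middle_conv) simp
  also have "\<dots> = [3, 1] @ drop 2 (butlast xs) @ [2]"
    using nth_q q_eq_0 nth_succ_q_eq_1 last_eq_2 length_eq \<open>xs \<noteq> []\<close> by (simp add: last_conv_nth)
  finally show "xs = [3, 1] @ drop 2 (butlast xs) @ [2]" .
qed

lemma set_middle:
  assumes "xs = [3, 1] @ M @ [2]"
  shows "set M = {4..n}"
proof -
  have "distinct ([3, 1] @ M @ [2])" "set ([3, 1] @ M @ [2]) = {1..n}"
    using perm unfolding assms is_perm_def by simp_all
  have "set M = set ([3, 1] @ M @ [2]) - {1, 2, 3}" using \<open>distinct ([3, 1] @ M @ [2])\<close> by auto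
  also have "\<dots> = {1..n} - {1, 2, 3}" using \<open>set ([3, 1] @ M @ [2]) = {1..n}\<close> by (simp only:)
  also have "\<dots> = {4..n}" by auto
  finally show ?thesis .
qed

lemma sorted_middle:
  assumes xs: "xs = [3, 1] @ M @ [2]"
  shows "sorted_wrt (<) M"
  unfolding sorted_wrt_iff_nth_less
proof (intro allI impI)
  fix i j assume ij: "i < j" "j < length M"
  have len: "length M + 3 = n" using length_eq unfolding xs by simp
  have nth_M: "M ! k = xs ! (k + 2)" if "k < length M" for k
    using that unfolding xs by (simp add: nth_append)
  have "4 \<le> M ! j" using set_middle[OF xs] nth_mem[OF ij(2)] by auto
  moreover have "M ! i \<noteq> M ! j" using nth_eq_iff[of "i + 2" "j + 2"] ij len nth_M by simp
  ultimately show "M ! i < M ! j"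
    using no_321[of "i + 2" "j + 2" "n - 1"] ij len nth_M last_eq_2 by fastforce
qed

lemma eq_exceptional: "xs = exceptional n"
proof -
  obtain M where xs: "xs = [3, 1] @ M @ [2]" using append_middle_eq .
  have "set M = set [4..<n + 1]" using set_middle[OF xs] by (simp del: upt_Suc add: atLeastLessThanSuc_atLeastAtMost)
  then have "M = [4..<n + 1]" by (rule strict_sorted_equal[OF sorted_wrt_upt sorted_middle[OF xs]])
  then show ?thesis unfolding xs exceptional_def by simp
qed

end

lemma (in avoider) classification:
  assumes "2 \<le> n"
  shows "(\<exists>ys. xs = ys @ [n]) \<or> (\<exists>ys. xs = ys @ [n, n - 1]) \<or> (3 \<le> n \<and> xs = exceptional n)"
proof -
  obtain p where p: "p < n" "xs ! p = n" using obtain_position[of n] assms by auto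
  obtain ys a b where xs: "xs = ys @ [a, b]"
    using length_eq assms by (cases xs rule: rev_cases; cases "butlast xs" rule: rev_cases) auto
  have ab: "xs ! (n - 2) = a" "xs ! (n - 1) = b" using length_eq unfolding xs by (auto simp: nth_append)
  have "n \<le> p + 3" using max_position_ge[OF p] .
  then consider "p = n - 1" | "p = n - 2" | "p = n - 3" "3 \<le> n" using p assms by linarith
  then show ?thesis
  proof cases
    case 1
    then show ?thesis using xs ab p by auto
  next
    case 2
    show ?thesis
    proof (cases "b = n - 1")
      case True
      then show ?thesis using xs ab p 2 by auto
    next
      case False
      have "b \<noteq> n" using nth_eq_iff[of "n - 1" "n - 2"] ab p 2 assms by auto
      then have small: "b + 1 < n" using nth_le[of "n - 1"] ab False assms by auto
      then obtain q where "q < n" "xs ! q = b + 1" using obtain_position[of "b + 1"] by auto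
      then interpret avoider_max_penultimate n xs q
        using p 2 ab small by unfold_locales auto
      show ?thesis using eq_exceptional four_le by simp
    qed
  next
    case 3
    then interpret avoider_max_antepenultimate n xs
      using p by unfold_locales auto
    show ?thesis using eq_exceptional three_le by simp
  qed
qed

section \<open>Counting\<close>

lemma avoiders_Suc_Suc:
  "avoiders (Suc (Suc k)) =
     (\<lambda>ys. ys @ [Suc (Suc k)]) ` avoiders (Suc k) \<union> (\<lambda>ys. ys @ [Suc (Suc k), Suc k]) ` avoiders k \<union>
     (if k = 0 then {} else {exceptional (Suc (Suc k))})"
    (is "_ = ?A \<union> ?B \<union> ?C")
proof
  show "avoiders (Suc (Suc k)) \<subseteq> ?A \<union> ?B \<union> ?C"
  proof
    fix xs assume "xs \<in> avoiders (Suc (Suc k))"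
    then interpret avoider "Suc (Suc k)" xs by unfold_locales
    from classification consider ys where "xs = ys @ [Suc (Suc k)]" | ys where "xs = ys @ [Suc (Suc k), Suc k]"
      | "k \<noteq> 0" "xs = exceptional (Suc (Suc k))" by fastforce
    then show "xs \<in> ?A \<union> ?B \<union> ?C"
      by cases (use mem snoc_mem_avoiders_iff append_pair_mem_avoiders_iff in auto)
  qed
next
  show "?A \<union> ?B \<union> ?C \<subseteq> avoiders (Suc (Suc k))"
    using snoc_mem_avoiders_iff append_pair_mem_avoiders_iff exceptional_mem_avoiders[of "Suc (Suc k)"] by auto
qed

lemma finite_avoiders: "finite (avoiders n)"
proof (rule finite_subset)
  show "avoiders n \<subseteq> {xs. set xs \<subseteq> {1..n} \<and> length xs = n}"
    unfolding fishburn_avoiders_def is_perm_def by auto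
qed (simp add: finite_lists_length_eq)

lemma card_avoiders_Suc_Suc:
  "card (avoiders (Suc (Suc k))) = card (avoiders (Suc k)) + card (avoiders k) + (if k = 0 then 0 else 1)"
proof -
  let ?A = "(\<lambda>ys. ys @ [Suc (Suc k)]) ` avoiders (Suc k)"
    and ?B = "(\<lambda>ys. ys @ [Suc (Suc k), Suc k]) ` avoiders k"
    and ?C = "if k = 0 then {} else {exceptional (Suc (Suc k))}"
  have "?A \<inter> ?B = {}" by (auto dest: arg_cong[of _ _ last])
  moreover have "(?A \<union> ?B) \<inter> ?C = {}"
    using exceptional_neq_append[of "Suc (Suc k)"] by (cases "k = 0") (simp, force)
  moreover have "card ?A = card (avoiders (Suc k))" "card ?B = card (avoiders k)"
    by (simp_all add: card_image inj_on_def)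
  moreover have "finite ?A" "finite ?B" "finite ?C" using finite_avoiders by auto
  ultimately show ?thesis
    unfolding avoiders_Suc_Suc by (simp add: card_Un_disjoint del: Un_iff)
qed

lemma avoiders_0: "avoiders 0 = {[]}"
proof -
  have "xs \<in> avoiders 0 \<longleftrightarrow> xs = []" for xs
    unfolding mem_avoiders_iff by (auto simp: is_perm_def fishburn_def avoids_def contains_Nil_iff)
  then show ?thesis by blast
qed

lemma avoiders_1: "avoiders 1 = {[1]}"
proof -
  have "xs = [1]" if "xs \<in> avoiders 1" for xs
    using that unfolding mem_avoiders_iff is_perm_def by (cases xs) auto
  moreover have "[1] \<in> avoiders 1" using snoc_mem_avoiders_iff[of "[]" 0] avoiders_0 by simp
  ultimately show ?thesis by blast
qed

lemma card_avoiders_Suc: "card (avoiders (Suc n)) + 1 = fib1 (Suc (Suc n))"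
proof (induction n rule: fib1.induct)
  case 1
  then show ?case using avoiders_1 by simp
next
  case 2
  then show ?case using card_avoiders_Suc_Suc[of 0] avoiders_0 avoiders_1 by simp
next
  case (3 n)
  then show ?case using card_avoiders_Suc_Suc[of "Suc n"] by simp
qed

theorem mainTheorem14:
  fixes n :: nat
  assumes "n \<ge> 1"
  shows "card (fishburn_avoiders n [[3,2,1], [1,4,2,3], [4,1,2,3]]) = fib1 (n + 1) - 1"
proof -
  obtain k where "n = Suc k" using assms by (cases n) auto
  then show ?thesis using card_avoiders_Suc[of k] by simp
qed

end
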